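(* Let $m,\ell\in\mathbb{N}$ with $m\ge4\ell$, and let $\mathcal{S}=(i_1,\dots,i_{\ell'})\in[m]^{\ell'}$ be a sequence of length $\ell'\le\ell$. Then $\mathcal{S}$ is $(m,\ell)$-clustered or $(m,\ell)$-dispersed.
   Context: $[m]=\{1,\dots,m\}$, $\mathbb{N}=\{1,2,\dots\}$, and $[a,b]$ denotes the integer interval $\{a,\dots,b\}$. Let $I=\{i_1,\dots,i_{\ell'}\}$. $\mathcal{S}$ is $(m,\ell)$-clustered if there exist $k\in\mathbb{N}$, $p_1,\dots,p_k\in[m]$, $q_1,\dots,q_k\in\mathbb{N}$ with: (i) the intervals $[p_c,p_c+q_c]$ are pairwise disjoint, contained in $[1,m]$, and their union contains $I$; (ii) for every $c\in[k]$, with $K_c=[p_c,p_c+q_c]\cap I$, $q_c+1\ge\lfloor\frac{m}{2\ell}\rfloor\cdot\min\big(\max(K_c)-p_c+1,\;p_c+q_c-\min(K_c)+1\big)$; (iii) $\sum_{j=1}^k(q_j+1)+2(\ell-\ell')\le m$. $\mathcal{S}$ is $(m,\ell)$-dispersed if there exist $k\in\mathbb{Z}_{\ge0}$, $\psi,p_1,\dots,p_k\in[m]$ and $\xi,q_1,\dots,q_k\in\mathbb{N}$ such that, with $K=I\cap[\psi,\psi+\xi]$: (i) the intervals $[\psi,\psi+\xi],[p_1,p_1+q_1],\dots,[p_k,p_k+q_k]$ are pairwise disjoint, contained in $[1,m]$, and their union contains $I$; (ii) for $j=1,\dots,k$, $q_j\ge 2\cdot|\{c\in[\ell']:i_c\in[p_j,p_j+q_j]\}|-1$;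 (iii) $K=\{\psi\}$ or $K=\{\psi+\xi\}$; (iv) $\xi\ge\lfloor\frac{m}{2\ell}\rfloor\cdot|\{c:i_c\in K\}|-1$; (v) $(\xi+1)+\sum_{j=1}^k(q_j+1)+2(\ell-\ell')\le m$. *)

theory Defs
  imports Main
begin

text \<open>A sequence S = (i_1,...,i_l') is a list; its entries form the set I = set S.
  Positions are 0-based internally: entry i_c is S ! (c-1).  Intervals are indexed by c in {1..k}.\<close>

definition clustered :: "nat \<Rightarrow> nat \<Rightarrow> nat list \<Rightarrow> bool" where
  "clustered m l S \<longleftrightarrow>
    (\<exists>k::nat. \<exists>p q :: nat \<Rightarrow> nat. k \<ge> 1 \<and>
       (\<forall>c\<in>{1..k}. p c \<in> {1..m} \<and> q c \<ge> 1) \<and>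
       (\<forall>c\<in>{1..k}. \<forall>d\<in>{1..k}. c \<noteq> d \<longrightarrow> {p c..p c + q c} \<inter> {p d..p d + q d} = {}) \<and>
       (\<forall>c\<in>{1..k}. {p c..p c + q c} \<subseteq> {1..m}) \<and>
       set S \<subseteq> (\<Union>c\<in>{1..k}. {p c..p c + q c}) \<and>
       (\<forall>c\<in>{1..k}. let K = {p c..p c + q c} \<inter> set S in
          q c + 1 \<ge> (m div (2 * l)) *
             min (Max K - p c + 1) (p c + q c - Min K + 1)) \<and>
       (\<Sum>j=1..k. q j + 1) + 2 * (l - length S) \<le> m)"

definition dispersed :: "nat \<Rightarrow> nat \<Rightarrow> nat list \<Rightarrow> bool" where
  "dispersed m l S \<longleftrightarrow>
    (\<exists>k::nat. \<exists>\<psi> \<xi> :: nat. \<exists>p q :: nat \<Rightarrow> nat.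
       \<psi> \<in> {1..m} \<and> \<xi> \<ge> 1 \<and>
       (\<forall>j\<in>{1..k}. p j \<in> {1..m} \<and> q j \<ge> 1) \<and>
       (\<forall>j\<in>{1..k}. {\<psi>..\<psi> + \<xi>} \<inter> {p j..p j + q j} = {}) \<and>
       (\<forall>c\<in>{1..k}. \<forall>d\<in>{1..k}. c \<noteq> d \<longrightarrow> {p c..p c + q c} \<inter> {p d..p d + q d} = {}) \<and>
       {\<psi>..\<psi> + \<xi>} \<subseteq> {1..m} \<and>
       (\<forall>j\<in>{1..k}. {p j..p j + q j} \<subseteq> {1..m}) \<and>
       set S \<subseteq> {\<psi>..\<psi> + \<xi>} \<union> (\<Union>j\<in>{1..k}. {p j..p j + q j}) \<and>
       (\<forall>j\<in>{1..k}. int (q j) \<ge>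
          2 * int (card {c. c < length S \<and> S ! c \<in> {p j..p j + q j}}) - 1) \<and>
       (let K = set S \<inter> {\<psi>..\<psi> + \<xi>} in
          (K = {\<psi>} \<or> K = {\<psi> + \<xi>}) \<and>
          int \<xi> \<ge> int (m div (2 * l)) * int (card {c. c < length S \<and> S ! c \<in> K}) - 1) \<and>
       (\<xi> + 1) + (\<Sum>j=1..k. q j + 1) + 2 * (l - length S) \<le> m)"

end

(* Weight each point of [1..m] by its multiplicity w in S, and call an interval dense if its length
   is at most twice its weight and balanced if it is exactly twice its weight.  The longest dense
   prefix [1..pre] and the longest dense suffix [suf..m] are balanced, and by maximality every
   interval of the gap between them that starts right after pre, or ends right before suf, is
   sparse.  Since |S| <= l <= m/4, pre < suf.

   If no entry of S lies in the gap, the two end blocks stretched by the factor m div 2l form a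
   clustered family.  Otherwise the neighbourhoods of radius (m div 2l) w(x) - 2 of the entries x in
   the gap are too short to cover it; the entry nearest to an uncovered point then carries an
   interval of length (m div 2l) w(x) that meets S only in x, at one of its ends.  The rest of S is
   covered by balanced intervals: the two end blocks and, inside the gap, intervals grown greedily
   away from the isolated interval, which the sparsity keeps inside the gap.  This is a dispersed
   family. *)

theory Submission
  imports Defs "HOL-Library.Disjoint_Sets"
begin

lemma length_filter_mem_eq_sum_count_list:
  assumes "finite J"
  shows "length (filter (\<lambda>y. y \<in> J) S) = sum (count_list S) J"
proof (induction S)
  case (Cons a S)
  have "count_list (a # S) = (\<lambda>y. count_list S y + (if a = y then 1 else 0))"
    by auto
  then show ?case
    using Cons assms by (simp add: sum.distrib)
qed simp

lemma count_list_pos_iff: "0 < count_list xs y \<longleftrightarrow> y \<in> set xs"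
  using count_list_0_iff[of xs y] by auto

lemma card_indices_eq_sum_count_list:
  assumes "finite J"
  shows "card {c. c < length S \<and> S ! c \<in> J} = sum (count_list S) J"
proof -
  have "card {c. c < length S \<and> S ! c \<in> J} = length (filter (\<lambda>y. y \<in> J) S)"
    by (simp add: length_filter_conv_card)
  then show ?thesis
    using length_filter_mem_eq_sum_count_list[OF assms] by simp
qed

lemma sum_atLeastAtMost_split:
  fixes w :: "nat \<Rightarrow> nat"
  assumes "a \<le> Suc b" "b \<le> c"
  shows "sum w {a..c} = sum w {a..b} + sum w {Suc b..c}"
  using sum.ub_add_nat[of a b w "c - b"] assms by simp

lemma sum_atLeastAtMost_reflect:
  fixes w :: "nat \<Rightarrow> 'a::comm_monoid_add"
  assumes "a \<le> b" "b \<le> C"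
  shows "sum (\<lambda>y. w (C - y)) {a..b} = sum w {C - b..C - a}"
  by (rule sum.reindex_bij_witness[of _ "\<lambda>z. C - z" "\<lambda>z. C - z"]) (use assms in auto)

lemma two_le_div_double:
  fixes l m :: nat
  assumes "1 \<le> l" "4 * l \<le> m"
  shows "2 \<le> m div (2 * l)"
  using assms by (subst less_eq_div_iff_mult_less_eq) auto

lemma div_double_budget:
  fixes l m a :: nat
  assumes "1 \<le> l" "4 * l \<le> m" "a \<le> l"
  shows "2 * (m div (2 * l) * a + (l - a)) \<le> m"
proof -
  let ?t = "m div (2 * l)"
  have "l - a \<le> ?t * (l - a)"
    using two_le_div_double[OF assms(1,2)] by simp
  then have "2 * (?t * a + (l - a)) \<le> 2 * (?t * a + ?t * (l - a))"
    by simp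
  also have "\<dots> = 2 * l * ?t"
    using assms(3) by (simp flip: distrib_left)
  also have "\<dots> \<le> m"
    by (simp add: mult.commute)
  finally show ?thesis .
qed

lemma scaled_end_distance_le:
  fixes K :: "nat set"
  assumes "finite K" "K \<noteq> {}" "K \<subseteq> {a..b}" "Max K < a + d \<or> b < Min K + d"
    and "t * d \<le> b + 1 - a"
  shows "t * min (Max K - a + 1) (b - Min K + 1) \<le> b + 1 - a"
proof -
  have "a \<le> Max K" "Min K \<le> b"
    using Max_in[OF assms(1,2)] Min_in[OF assms(1,2)] assms(3) by auto
  then have "min (Max K - a + 1) (b - Min K + 1) \<le> d"
    using assms(4) by linarith
  then show ?thesis
    using assms(5) mult_le_mono2 order_trans by blast
qed

lemma longest_dense_prefix:
  fixes w :: "nat \<Rightarrow> nat"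
  assumes "2 * sum w {1..m} \<le> m"
  obtains z where "z \<le> m" "z = 2 * sum w {1..z}" "\<forall>z'\<in>{z<..m}. 2 * sum w {1..z'} < z'"
proof -
  define Z where "Z = {z. z \<le> m \<and> z \<le> 2 * sum w {1..z}}"
  define z where "z = Max Z"
  have "finite Z"
    unfolding Z_def by simp
  moreover have "0 \<in> Z"
    unfolding Z_def by simp
  ultimately have "z \<in> Z"
    unfolding z_def by (intro Max_in) auto
  have maximal: "z' \<le> z" if "z' \<in> Z" for z'
    unfolding z_def using \<open>finite Z\<close> that by (intro Max_ge)
  let ?E = "2 * sum w {1..z}"
  have "z \<le> ?E" "z \<le> m"
    using \<open>z \<in> Z\<close> by (auto simp: Z_def)
  moreover have "?E \<le> m"
    using assms \<open>z \<le> m\<close> sum_mono2[of "{1..m}" "{1..z}" w] by simp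
  moreover have "?E \<le> 2 * sum w {1..?E}"
    using \<open>z \<le> ?E\<close> sum_mono2[of "{1..?E}" "{1..z}" w] by simp
  ultimately have "?E \<in> Z"
    unfolding Z_def by simp
  then have "z = ?E"
    using maximal \<open>z \<le> ?E\<close> by (simp add: le_antisym)
  moreover have "2 * sum w {1..z'} < z'" if "z' \<in> {z<..m}" for z'
    using maximal[of z'] that by (force simp: Z_def)
  ultimately show ?thesis
    using that \<open>z \<le> m\<close> by blast
qed

lemma longest_dense_suffix:
  fixes w :: "nat \<Rightarrow> nat"
  assumes "2 * sum w {1..m} \<le> m"
  obtains s where "1 \<le> s" "s \<le> m + 1" "m + 1 - s = 2 * sum w {s..m}"
    "\<forall>s'\<in>{1..<s}. 2 * sum w {s'..m} < m + 1 - s'"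
proof -
  let ?w = "\<lambda>y. w (m + 1 - y)"
  have reflect: "sum ?w {1..z} = sum w {m + 1 - z..m}" if "z \<le> m" for z
    using sum_atLeastAtMost_reflect[of 1 z "m + 1" w] that by (cases "z = 0") auto
  obtain z where z: "z \<le> m" "z = 2 * sum ?w {1..z}" "\<forall>z'\<in>{z<..m}. 2 * sum ?w {1..z'} < z'"
    using longest_dense_prefix[of ?w m] assms reflect[of m] by auto
  show ?thesis
  proof (rule that[of "m + 1 - z"])
    show "1 \<le> m + 1 - z" "m + 1 - z \<le> m + 1" "m + 1 - (m + 1 - z) = 2 * sum w {m + 1 - z..m}"
      using z(1,2) reflect[of z] by auto
    show "\<forall>s'\<in>{1..<m + 1 - z}. 2 * sum w {s'..m} < m + 1 - s'"
    proof
      fix s'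
      assume "s' \<in> {1..<m + 1 - z}"
      then have "m + 1 - s' \<in> {z<..m}" "m + 1 - (m + 1 - s') = s'"
        by auto
      then show "2 * sum w {s'..m} < m + 1 - s'"
        using z(3) reflect[of "m + 1 - s'"] by fastforce
    qed
  qed
qed

section \<open>Covers by balanced intervals\<close>

definition balanced_cover :: "(nat \<Rightarrow> nat) \<Rightarrow> nat \<Rightarrow> nat \<Rightarrow> (nat \<times> nat) set \<Rightarrow> bool" where
  "balanced_cover w A B F \<longleftrightarrow> finite F \<and> disjoint_family_on (\<lambda>(a, b). {a..b}) F \<and>
     (\<forall>(a, b)\<in>F. A \<le> a \<and> a < b \<and> b \<le> B \<and> b + 1 - a = 2 * sum w {a..b}) \<and>
     {y\<in>{A..B}. 0 < w y} \<subseteq> (\<Union>(a, b)\<in>F. {a..b})"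

lemma balanced_cover_dense_block:
  assumes "B + 1 - A = 2 * sum w {A..B}"
  shows "\<exists>F. balanced_cover w A B F"
proof (cases "sum w {A..B} = 0")
  case True
  then show ?thesis
    by (intro exI[of _ "{}"]) (auto simp: balanced_cover_def disjoint_family_on_def)
next
  case False
  then have "A < B"
    using assms by linarith
  then show ?thesis
    using assms by (intro exI[of _ "{(A, B)}"]) (auto simp: balanced_cover_def disjoint_family_on_def)
qed

text \<open>At \<open>b = a\<close> the interval \<open>{a..b}\<close> is too short for its weight; each step to the right
  lengthens it by one and does not decrease its weight, so the first \<open>b\<close> where it is no longer too
  short makes it balanced.\<close>

lemma first_balanced_interval:
  fixes w :: "nat \<Rightarrow> nat"
  assumes "a \<le> B" "0 < w a" "2 * sum w {a..B} \<le> B + 1 - a"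
  obtains b where "a < b" "b \<le> B" "b + 1 - a = 2 * sum w {a..b}"
proof -
  define b where "b = Min {b\<in>{a..B}. 2 * sum w {a..b} \<le> b + 1 - a}"
  have "b \<in> {b\<in>{a..B}. 2 * sum w {a..b} \<le> b + 1 - a}"
    unfolding b_def using assms by (intro Min_in) auto
  then have b: "a \<le> b" "b \<le> B" "2 * sum w {a..b} \<le> b + 1 - a"
    by auto
  have least: "b \<le> b'" if "b' \<in> {a..B}" "2 * sum w {a..b'} \<le> b' + 1 - a" for b'
    unfolding b_def using that by (intro Min_le) auto
  have "a < b"
    using b assms(2) by (cases "a = b") auto
  then have "\<not> 2 * sum w {a..b - 1} \<le> b - 1 + 1 - a"
    using least[of "b - 1"] b by fastforce
  then have "b + 1 - a \<le> 2 * sum w {a..b - 1}"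
    using \<open>a < b\<close> by simp
  also have "\<dots> \<le> 2 * sum w {a..b}"
    by (simp add: sum_mono2)
  finally have "b + 1 - a = 2 * sum w {a..b}"
    using b(3) by simp
  then show ?thesis
    using that \<open>a < b\<close> b(2) by blast
qed

lemma balanced_cover_if_sparse_suffixes:
  assumes "\<forall>s\<in>{A..B}. 2 * sum w {s..B} \<le> B + 1 - s"
  shows "\<exists>F. balanced_cover w A B F"
  using assms
proof (induction "B + 1 - A" arbitrary: A rule: less_induct)
  case less
  show ?case
  proof (cases "\<exists>y\<in>{A..B}. 0 < w y")
    case False
    then show ?thesis
      by (intro exI[of _ "{}"]) (auto simp: balanced_cover_def disjoint_family_on_def)
  next
    case True
    define a where "a = Min {y\<in>{A..B}. 0 < w y}"
    have "a \<in> {y\<in>{A..B}. 0 < w y}"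
      unfolding a_def using True by (intro Min_in) auto
    then have a: "a \<in> {A..B}" "0 < w a"
      by auto
    have before_a: "w y = 0" if "A \<le> y" "y < a" for y
      using Min_le[of "{y\<in>{A..B}. 0 < w y}" y] that a by (fastforce simp: a_def)
    obtain b where "a < b" "b \<le> B" and balanced: "b + 1 - a = 2 * sum w {a..b}"
      using first_balanced_interval[of a B w] a less.prems by auto
    have "B + 1 - Suc b < B + 1 - A" "\<forall>s\<in>{Suc b..B}. 2 * sum w {s..B} \<le> B + 1 - s"
      using less.prems a \<open>a < b\<close> \<open>b \<le> B\<close> by auto
    then obtain F where F: "balanced_cover w (Suc b) B F"
      using less.hyps by blast
    show ?thesis
    proof (intro exI[of _ "insert (a, b) F"])
      have F_right: "\<forall>(c, d)\<in>F. b < c"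
        using F by (auto simp: balanced_cover_def disjoint_family_on_def)
      have "(a, b) \<notin> F" and "{a..b} \<inter> (\<Union>(c, d)\<in>F. {c..d}) = {}"
        using F_right \<open>a < b\<close> by auto
      moreover have "{y\<in>{A..B}. 0 < w y} \<subseteq> {a..b} \<union> {y\<in>{Suc b..B}. 0 < w y}"
      proof
        fix y
        assume y: "y \<in> {y\<in>{A..B}. 0 < w y}"
        then have "a \<le> y"
          using before_a[of y] by (cases "y < a") auto
        then show "y \<in> {a..b} \<union> {y\<in>{Suc b..B}. 0 < w y}"
          using y by auto
      qed
      ultimately show "balanced_cover w A B (insert (a, b) F)"
        using F a \<open>a < b\<close> \<open>b \<le> B\<close> balanced
        by (auto simp: balanced_cover_def disjoint_family_on_insert)
    qed
  qed
qed

lemma balanced_cover_reflect: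
  assumes "balanced_cover (\<lambda>y. w (A + B - y)) A B F"
  shows "balanced_cover w A B ((\<lambda>(a, b). (A + B - b, A + B - a)) ` F)"
proof -
  let ?C = "A + B"
  have F: "finite F" "disjoint_family_on (\<lambda>(a, b). {a..b}) F"
    "\<forall>(a, b)\<in>F. A \<le> a \<and> a < b \<and> b \<le> B \<and> b + 1 - a = 2 * sum (\<lambda>y. w (?C - y)) {a..b}"
    "{y\<in>{A..B}. 0 < w (?C - y)} \<subseteq> (\<Union>(a, b)\<in>F. {a..b})"
    using assms by (auto simp: balanced_cover_def)
  have "disjoint_family_on (\<lambda>(a, b). {a..b}) ((\<lambda>(a, b). (?C - b, ?C - a)) ` F)"
    unfolding disjoint_family_on_def
  proof (intro ballI impI)
    fix i j
    assume "i \<in> (\<lambda>(a, b). (?C - b, ?C - a)) ` F" "j \<in> (\<lambda>(a, b). (?C - b, ?C - a)) ` F" "i \<noteq> j"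
    then obtain a b c d where ab: "(a, b) \<in> F" "i = (?C - b, ?C - a)"
      and cd: "(c, d) \<in> F" "j = (?C - d, ?C - c)" and "(a, b) \<noteq> (c, d)"
      by auto
    then have "{a..b} \<inter> {c..d} = {}"
      using F(2) unfolding disjoint_family_on_def by fastforce
    moreover have "?C - y \<in> {a..b} \<inter> {c..d}"
      if "y \<in> {?C - b..?C - a} \<inter> {?C - d..?C - c}" for y
      using F(3) ab(1) cd(1) that by fastforce
    ultimately show "(case i of (a, b) \<Rightarrow> {a..b}) \<inter> (case j of (a, b) \<Rightarrow> {a..b}) = {}"
      using ab(2) cd(2) by blast
  qed
  moreover have "\<forall>(a, b)\<in>F. A \<le> ?C - b \<and> ?C - b < ?C - a \<and> ?C - a \<le> B \<and>
      (?C - a) + 1 - (?C - b) = 2 * sum w {?C - b..?C - a}"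
    using F(3) sum_atLeastAtMost_reflect[of _ _ ?C w] by fastforce
  moreover have "{y\<in>{A..B}. 0 < w y} \<subseteq> (\<Union>(a, b)\<in>F. {?C - b..?C - a})"
  proof
    fix y
    assume y: "y \<in> {y\<in>{A..B}. 0 < w y}"
    then have "?C - y \<in> {y\<in>{A..B}. 0 < w (?C - y)}"
      by auto
    then obtain a b where "(a, b) \<in> F" "?C - y \<in> {a..b}"
      using F(4) by blast
    then show "y \<in> (\<Union>(a, b)\<in>F. {?C - b..?C - a})"
      using y by force
  qed
  ultimately show ?thesis
    using F(1) by (auto simp: balanced_cover_def)
qed

lemma balanced_cover_if_sparse_prefixes:
  assumes "\<forall>z\<in>{A..B}. 2 * sum w {A..z} \<le> z + 1 - A"
  shows "\<exists>F. balanced_cover w A B F"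
proof -
  let ?w = "\<lambda>y. w (A + B - y)"
  have "\<forall>s\<in>{A..B}. 2 * sum ?w {s..B} \<le> B + 1 - s"
  proof
    fix s
    assume s: "s \<in> {A..B}"
    then have "sum ?w {s..B} = sum w {A..A + B - s}"
      using sum_atLeastAtMost_reflect[of s B "A + B" w] by simp
    moreover have "A + B - s \<in> {A..B}"
      using s by auto
    then have "2 * sum w {A..A + B - s} \<le> (A + B - s) + 1 - A"
      using assms by blast
    ultimately show "2 * sum ?w {s..B} \<le> B + 1 - s"
      using s by simp
  qed
  then obtain F where "balanced_cover ?w A B F"
    using balanced_cover_if_sparse_suffixes by blast
  then have "balanced_cover w A B ((\<lambda>(a, b). (A + B - b, A + B - a)) ` F)"
    by (intro balanced_cover_reflect) simp
  then show ?thesis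
    by blast
qed

lemma balanced_cover_disjoint_Un:
  assumes "balanced_cover w A B F" "balanced_cover w C D G" "B < C"
  shows "disjoint_family_on (\<lambda>(a, b). {a..b}) (F \<union> G)"
  unfolding disjoint_family_on_def
proof (intro ballI impI)
  fix i j
  assume ij: "i \<in> F \<union> G" "j \<in> F \<union> G" "i \<noteq> j"
  obtain a b c d where i: "i = (a, b)" and j: "j = (c, d)"
    by fastforce
  have F: "disjoint_family_on (\<lambda>(a, b). {a..b}) F" "\<forall>(a, b)\<in>F. b \<le> B"
    and G: "disjoint_family_on (\<lambda>(a, b). {a..b}) G" "\<forall>(a, b)\<in>G. C \<le> a"
    using assms(1,2) by (auto simp: balanced_cover_def)
  from ij consider "i \<in> F" "j \<in> F" | "i \<in> G" "j \<in> G" | "i \<in> F" "j \<in> G" | "i \<in> G" "j \<in> F"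
    by blast
  then show "(case i of (a, b) \<Rightarrow> {a..b}) \<inter> (case j of (a, b) \<Rightarrow> {a..b}) = {}"
  proof cases
    case 1
    then show ?thesis
      using disjoint_family_onD[OF F(1)] ij(3) by blast
  next
    case 2
    then show ?thesis
      using disjoint_family_onD[OF G(1)] ij(3) by blast
  next
    case 3
    then have "b < c"
      using F(2) G(2) assms(3) i j by fastforce
    then show ?thesis
      using i j by auto
  next
    case 4
    then have "d < a"
      using F(2) G(2) assms(3) i j by fastforce
    then show ?thesis
      using i j by auto
  qed
qed

lemma balanced_cover_Un:
  assumes "balanced_cover w A B F" "balanced_cover w (Suc B) C G" "A \<le> Suc B" "B \<le> C"
  shows "balanced_cover w A C (F \<union> G)"
proof -
  have "disjoint_family_on (\<lambda>(a, b). {a..b}) (F \<union> G)"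
    using balanced_cover_disjoint_Un[OF assms(1,2)] by simp
  moreover have "\<forall>(a, b)\<in>F \<union> G. A \<le> a \<and> a < b \<and> b \<le> C \<and> b + 1 - a = 2 * sum w {a..b}"
    using assms unfolding balanced_cover_def by auto
  moreover have "{y\<in>{A..C}. 0 < w y} \<subseteq> {y\<in>{A..B}. 0 < w y} \<union> {y\<in>{Suc B..C}. 0 < w y}"
    by auto
  ultimately show ?thesis
    using assms(1,2) unfolding balanced_cover_def by blast
qed

lemma sum_lengths_balanced_intervals_le:
  fixes w :: "nat \<Rightarrow> nat"
  assumes "finite F" "disjoint_family_on (\<lambda>(a, b). {a..b}) F" "finite U"
    and "\<And>a b. (a, b) \<in> F \<Longrightarrow> b + 1 - a = 2 * sum w {a..b} \<and> {a..b} \<subseteq> U"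
  shows "(\<Sum>(a, b)\<in>F. b + 1 - a) \<le> 2 * sum w U"
proof -
  have "(\<Sum>(a, b)\<in>F. b + 1 - a) = 2 * (\<Sum>i\<in>F. sum w ((\<lambda>(a, b). {a..b}) i))"
    using assms(4) by (auto simp: sum_distrib_left intro!: sum.cong)
  also have "\<dots> = 2 * sum w (\<Union>(a, b)\<in>F. {a..b})"
    using sum.UNION_disjoint[OF assms(1), of "\<lambda>(a, b). {a..b}" w] assms(2)
    by (simp add: case_prod_beta disjoint_family_on_def)
  also have "\<dots> \<le> 2 * sum w U"
    using assms(3,4) by (auto intro!: sum_mono2)
  finally show ?thesis .
qed

lemma nearest_point_isolated:
  fixes X :: "nat set" and r :: "nat \<Rightarrow> nat"
  assumes "finite X" "X \<noteq> {}" "\<forall>x\<in>X. y \<notin> {x - r x..x + r x}"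
  obtains x where "x \<in> X" "x + r x < y" "X \<inter> {x..x + Suc (r x)} = {x}"
    | x where "x \<in> X" "y < x - r x" "X \<inter> {x - Suc (r x)..x} = {x}"
proof (cases "\<exists>x\<in>X. x < y")
  case True
  define x where "x = Max {x\<in>X. x < y}"
  have "x \<in> {x\<in>X. x < y}"
    unfolding x_def using True assms(1) by (intro Max_in) auto
  then have x: "x \<in> X" "x < y"
    by auto
  have "x + r x < y"
    using assms(3) x by fastforce
  moreover have "x' \<le> x" if "x' \<in> X" "x' \<le> x + Suc (r x)" for x'
  proof -
    have "x' \<noteq> y"
      using assms(3) that(1) by fastforce
    then have "x' < y"
      using that(2) \<open>x + r x < y\<close> by linarith
    then show ?thesis
      unfolding x_def using assms(1) that(1) by (intro Max_ge) auto
  qed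
  ultimately show ?thesis
    using that(1) x by fastforce
next
  case False
  define x where "x = Min X"
  have x: "x \<in> X" "\<forall>x'\<in>X. x \<le> x'"
    using assms(1,2) by (auto simp: x_def)
  have "y < x - r x"
    using assms(3) x False by fastforce
  then show ?thesis
    using that(2) x by fastforce
qed

lemma interval_family_enumeration:
  assumes "finite F" "disjoint_family_on (\<lambda>(a, b). {a..b}) F" "\<And>a b. (a, b) \<in> F \<Longrightarrow> a < b"
  obtains p q :: "nat \<Rightarrow> nat" where
    "\<forall>c\<in>{1..card F}. (p c, p c + q c) \<in> F \<and> 1 \<le> q c"
    "\<forall>c\<in>{1..card F}. \<forall>d\<in>{1..card F}. c \<noteq> d \<longrightarrow> {p c..p c + q c} \<inter> {p d..p d + q d} = {}"
    "(\<Union>c\<in>{1..card F}. {p c..p c + q c}) = (\<Union>(a, b)\<in>F. {a..b})"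
    "(\<Sum>c=1..card F. q c + 1) = (\<Sum>(a, b)\<in>F. b + 1 - a)"
proof -
  obtain h where h: "bij_betw h {1..card F} F"
    using ex_bij_betw_nat_finite_1[OF assms(1)] by blast
  define p where "p c = fst (h c)" for c
  define q where "q c = snd (h c) - fst (h c)" for c
  have h_in: "h c \<in> F" if "c \<in> {1..card F}" for c
    using bij_betwE[OF h] that by blast
  have h_eq: "h c = (p c, p c + q c)" and q_pos: "1 \<le> q c" if "c \<in> {1..card F}" for c
    using h_in[OF that] assms(3)[of "fst (h c)" "snd (h c)"] by (auto simp: p_def q_def)
  show ?thesis
  proof (rule that)
    show "\<forall>c\<in>{1..card F}. (p c, p c + q c) \<in> F \<and> 1 \<le> q c"
      using h_in h_eq q_pos by simp
    show "\<forall>c\<in>{1..card F}. \<forall>d\<in>{1..card F}. c \<noteq> d \<longrightarrow> {p c..p c + q c} \<inter> {p d..p d + q d} = {}"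
    proof (intro ballI impI)
      fix c d
      assume c: "c \<in> {1..card F}" and d: "d \<in> {1..card F}" and "c \<noteq> d"
      then have "h c \<noteq> h d"
        using bij_betw_imp_inj_on[OF h] by (auto dest: inj_onD)
      then show "{p c..p c + q c} \<inter> {p d..p d + q d} = {}"
        using disjoint_family_onD[OF assms(2) h_in[OF c] h_in[OF d]] h_eq[OF c] h_eq[OF d] by simp
    qed
    have "(\<Union>(a, b)\<in>F. {a..b}) = (\<Union>c\<in>{1..card F}. (\<lambda>(a, b). {a..b}) (h c))"
      by (subst bij_betw_imp_surj_on[OF h, symmetric]) (simp add: image_image)
    also have "\<dots> = (\<Union>c\<in>{1..card F}. {p c..p c + q c})"
      by (rule SUP_cong) (simp_all add: h_eq)
    finally show "(\<Union>c\<in>{1..card F}. {p c..p c + q c}) = (\<Union>(a, b)\<in>F. {a..b})"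
      by simp
    have "(\<Sum>c=1..card F. q c + 1) = (\<Sum>c=1..card F. (\<lambda>(a, b). b + 1 - a) (h c))"
      using h_eq by (auto intro!: sum.cong)
    then show "(\<Sum>c=1..card F. q c + 1) = (\<Sum>(a, b)\<in>F. b + 1 - a)"
      using sum.reindex_bij_betw[OF h, of "\<lambda>(a, b). b + 1 - a"] by simp
  qed
qed

lemma clustered_if_interval_family:
  assumes "finite F" "F \<noteq> {}" "disjoint_family_on (\<lambda>(a, b). {a..b}) F"
    and "\<And>a b. (a, b) \<in> F \<Longrightarrow> 1 \<le> a \<and> a < b \<and> b \<le> m"
    and "set S \<subseteq> (\<Union>(a, b)\<in>F. {a..b})"
    and "\<And>a b. (a, b) \<in> F \<Longrightarrow> let K = {a..b} \<inter> set S in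
           m div (2 * l) * min (Max K - a + 1) (b - Min K + 1) \<le> b + 1 - a"
    and "(\<Sum>(a, b)\<in>F. b + 1 - a) + 2 * (l - length S) \<le> m"
  shows "clustered m l S"
proof -
  obtain p q where pq:
    "\<forall>c\<in>{1..card F}. (p c, p c + q c) \<in> F \<and> 1 \<le> q c"
    "\<forall>c\<in>{1..card F}. \<forall>d\<in>{1..card F}. c \<noteq> d \<longrightarrow> {p c..p c + q c} \<inter> {p d..p d + q d} = {}"
    "(\<Union>c\<in>{1..card F}. {p c..p c + q c}) = (\<Union>(a, b)\<in>F. {a..b})"
    "(\<Sum>c=1..card F. q c + 1) = (\<Sum>(a, b)\<in>F. b + 1 - a)"
    using interval_family_enumeration[OF assms(1,3)] assms(4) by blast
  have member: "(p c, p c + q c) \<in> F" if "c \<in> {1..card F}" for c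
    using pq(1) that by blast
  show ?thesis
    unfolding clustered_def
  proof (rule exI[of _ "card F"], rule exI[of _ p], rule exI[of _ q], intro conjI ballI)
    show "1 \<le> card F"
      using assms(1,2) by (simp add: Suc_le_eq card_gt_0_iff)
    fix c
    assume c: "c \<in> {1..card F}"
    show "p c \<in> {1..m}" "1 \<le> q c" "{p c..p c + q c} \<subseteq> {1..m}"
      using assms(4)[OF member[OF c]] pq(1) c by auto
    show "let K = {p c..p c + q c} \<inter> set S in
        m div (2 * l) * min (Max K - p c + 1) (p c + q c - Min K + 1) \<le> q c + 1"
      using assms(6)[OF member[OF c]] by simp
  next
    fix c d
    assume "c \<in> {1..card F}" "d \<in> {1..card F}"
    then show "c \<noteq> d \<longrightarrow> {p c..p c + q c} \<inter> {p d..p d + q d} = {}"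
      using pq(2) by blast
  next
    show "set S \<subseteq> (\<Union>c\<in>{1..card F}. {p c..p c + q c})"
      using assms(5) pq(3) by simp
    show "(\<Sum>c=1..card F. q c + 1) + 2 * (l - length S) \<le> m"
      using pq(4) assms(7) by simp
  qed
qed

lemma dispersed_if_interval_family:
  assumes "finite F" "disjoint_family_on (\<lambda>(a, b). {a..b}) F"
    and "\<And>a b. (a, b) \<in> F \<Longrightarrow> 1 \<le> a \<and> a < b \<and> b \<le> m \<and> {a..b} \<inter> {\<psi>..\<psi> + \<xi>} = {} \<and>
           2 * sum (count_list S) {a..b} \<le> b + 1 - a"
    and "1 \<le> \<psi>" "1 \<le> \<xi>" "\<psi> + \<xi> \<le> m"
    and "set S \<subseteq> {\<psi>..\<psi> + \<xi>} \<union> (\<Union>(a, b)\<in>F. {a..b})"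
    and "set S \<inter> {\<psi>..\<psi> + \<xi>} = {x}" "x = \<psi> \<or> x = \<psi> + \<xi>"
    and "m div (2 * l) * count_list S x \<le> \<xi> + 1"
    and "\<xi> + 1 + (\<Sum>(a, b)\<in>F. b + 1 - a) + 2 * (l - length S) \<le> m"
  shows "dispersed m l S"
proof -
  obtain p q where pq:
    "\<forall>c\<in>{1..card F}. (p c, p c + q c) \<in> F \<and> 1 \<le> q c"
    "\<forall>c\<in>{1..card F}. \<forall>d\<in>{1..card F}. c \<noteq> d \<longrightarrow> {p c..p c + q c} \<inter> {p d..p d + q d} = {}"
    "(\<Union>c\<in>{1..card F}. {p c..p c + q c}) = (\<Union>(a, b)\<in>F. {a..b})"
    "(\<Sum>c=1..card F. q c + 1) = (\<Sum>(a, b)\<in>F. b + 1 - a)"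
    using interval_family_enumeration[OF assms(1,2)] assms(3) by blast
  have member: "(p c, p c + q c) \<in> F" if "c \<in> {1..card F}" for c
    using pq(1) that by blast
  show ?thesis
    unfolding dispersed_def
  proof (rule exI[of _ "card F"], rule exI[of _ \<psi>], rule exI[of _ \<xi>], rule exI[of _ p],
      rule exI[of _ q], intro conjI ballI)
    show "\<psi> \<in> {1..m}" "1 \<le> \<xi>" "{\<psi>..\<psi> + \<xi>} \<subseteq> {1..m}"
      using assms(4-6) by auto
    fix j
    assume j: "j \<in> {1..card F}"
    note interval = assms(3)[OF member[OF j]]
    show "p j \<in> {1..m}" "1 \<le> q j" "{p j..p j + q j} \<subseteq> {1..m}"
      "{\<psi>..\<psi> + \<xi>} \<inter> {p j..p j + q j} = {}"
      using interval pq(1) j by auto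
    have "2 * card {c. c < length S \<and> S ! c \<in> {p j..p j + q j}} \<le> q j + 1"
      using interval card_indices_eq_sum_count_list[of "{p j..p j + q j}" S] by simp
    then show "2 * int (card {c. c < length S \<and> S ! c \<in> {p j..p j + q j}}) - 1 \<le> int (q j)"
      by linarith
  next
    fix c d
    assume "c \<in> {1..card F}" "d \<in> {1..card F}"
    then show "c \<noteq> d \<longrightarrow> {p c..p c + q c} \<inter> {p d..p d + q d} = {}"
      using pq(2) by blast
  next
    show "set S \<subseteq> {\<psi>..\<psi> + \<xi>} \<union> (\<Union>j\<in>{1..card F}. {p j..p j + q j})"
      using assms(7) pq(3) by simp
    show "let K = set S \<inter> {\<psi>..\<psi> + \<xi>} in (K = {\<psi>} \<or> K = {\<psi> + \<xi>}) \<and>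
        int (m div (2 * l)) * int (card {c. c < length S \<and> S ! c \<in> K}) - 1 \<le> int \<xi>"
      using assms(8-10) card_indices_eq_sum_count_list[of "{x}" S] by (auto simp flip: of_nat_mult)
    show "\<xi> + 1 + (\<Sum>j=1..card F. q j + 1) + 2 * (l - length S) \<le> m"
      using pq(4) assms(11) by simp
  qed
qed

section \<open>The dense ends of a sequence\<close>

locale dense_ends =
  fixes m l :: nat and S :: "nat list" and pre suf :: nat
  assumes l_pos: "1 \<le> l" and m_ge: "4 * l \<le> m"
    and length_le: "length S \<le> l" and entries: "set S \<subseteq> {1..m}"
    and pre_le: "pre \<le> m"
    and pre_dense: "pre = 2 * sum (count_list S) {1..pre}"
    and pre_maximal: "\<forall>z\<in>{pre<..m}. 2 * sum (count_list S) {1..z} < z"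
    and suf_bounds: "1 \<le> suf" "suf \<le> m + 1"
    and suf_dense: "m + 1 - suf = 2 * sum (count_list S) {suf..m}"
    and suf_minimal: "\<forall>s\<in>{1..<suf}. 2 * sum (count_list S) {s..m} < m + 1 - s"
begin

abbreviation scale :: nat where
  "scale \<equiv> m div (2 * l)"

lemma two_le_scale: "2 \<le> scale"
  using two_le_div_double[OF l_pos m_ge] .

lemma two_le_scale_count:
  assumes "x \<in> set S"
  shows "2 \<le> scale * count_list S x"
proof -
  have "2 * 1 \<le> scale * count_list S x"
    using two_le_scale assms by (intro mult_le_mono) (auto simp: Suc_le_eq count_list_pos_iff)
  then show ?thesis
    by simp
qed

lemma total_weight: "sum (count_list S) {1..m} = length S"
  using entries by (intro sum_count_set) auto

lemma pre_less_suf: "pre < suf"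
proof -
  have "sum (count_list S) {1..pre} \<le> sum (count_list S) {1..m}"
    using pre_le by (intro sum_mono2) auto
  moreover have "sum (count_list S) {suf..m} \<le> sum (count_list S) {1..m}"
    using suf_bounds by (intro sum_mono2) auto
  ultimately show ?thesis
    using total_weight pre_dense suf_dense length_le m_ge suf_bounds by linarith
qed

lemma weight_decomposition:
  "sum (count_list S) {1..pre} + sum (count_list S) {pre<..<suf} + sum (count_list S) {suf..m} = length S"
proof -
  have "{1..m} = {1..pre} \<union> ({pre<..<suf} \<union> {suf..m})"
    using pre_less_suf suf_bounds by auto
  moreover have "sum (count_list S) ({1..pre} \<union> ({pre<..<suf} \<union> {suf..m})) =
      sum (count_list S) {1..pre} + sum (count_list S) ({pre<..<suf} \<union> {suf..m})"
    using pre_less_suf by (intro sum.union_disjoint) auto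
  moreover have "sum (count_list S) ({pre<..<suf} \<union> {suf..m}) =
      sum (count_list S) {pre<..<suf} + sum (count_list S) {suf..m}"
    by (intro sum.union_disjoint) auto
  ultimately show ?thesis
    using total_weight by simp
qed

subsection \<open>The dispersed case\<close>

lemma balanced_cover_below:
  assumes "pre < z" "z \<le> m + 1"
  shows "\<exists>F. balanced_cover (count_list S) 1 (z - 1) F"
proof -
  have "\<forall>y\<in>{Suc pre..z - 1}. 2 * sum (count_list S) {Suc pre..y} \<le> y + 1 - Suc pre"
  proof
    fix y
    assume y: "y \<in> {Suc pre..z - 1}"
    then have "2 * sum (count_list S) {1..y} < y"
      using pre_maximal assms by auto
    moreover have "sum (count_list S) {1..y} = sum (count_list S) {1..pre} + sum (count_list S) {Suc pre..y}"
      using y by (intro sum_atLeastAtMost_split) auto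
    ultimately show "2 * sum (count_list S) {Suc pre..y} \<le> y + 1 - Suc pre"
      using pre_dense by linarith
  qed
  then obtain G where "balanced_cover (count_list S) (Suc pre) (z - 1) G"
    using balanced_cover_if_sparse_prefixes by blast
  moreover obtain F where "balanced_cover (count_list S) 1 pre F"
    using balanced_cover_dense_block[of pre 1] pre_dense by auto
  ultimately have "balanced_cover (count_list S) 1 (z - 1) (F \<union> G)"
    using assms by (intro balanced_cover_Un) auto
  then show ?thesis
    by blast
qed

lemma balanced_cover_above:
  assumes "z < suf"
  shows "\<exists>F. balanced_cover (count_list S) (Suc z) m F"
proof -
  have "\<forall>s\<in>{Suc z..suf - 1}. 2 * sum (count_list S) {s..suf - 1} \<le> suf - 1 + 1 - s"
  proof
    fix s
    assume s: "s \<in> {Suc z..suf - 1}"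
    then have "2 * sum (count_list S) {s..m} < m + 1 - s"
      using suf_minimal assms by auto
    moreover have "sum (count_list S) {s..m} = sum (count_list S) {s..suf - 1} + sum (count_list S) {suf..m}"
      using s suf_bounds sum_atLeastAtMost_split[of s "suf - 1" m] by auto
    ultimately show "2 * sum (count_list S) {s..suf - 1} \<le> suf - 1 + 1 - s"
      using suf_dense suf_bounds by linarith
  qed
  then obtain F where "balanced_cover (count_list S) (Suc z) (suf - 1) F"
    using balanced_cover_if_sparse_suffixes by blast
  moreover obtain G where "balanced_cover (count_list S) (Suc (suf - 1)) m G"
    using balanced_cover_dense_block[of m suf] suf_dense suf_bounds by auto
  ultimately have "balanced_cover (count_list S) (Suc z) m (F \<union> G)"
    using assms suf_bounds by (intro balanced_cover_Un) auto
  then show ?thesis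
    by blast
qed

lemma balanced_cover_around:
  assumes "pre < \<psi>" "\<psi> + \<xi> < suf"
  obtains F where "finite F" "disjoint_family_on (\<lambda>(a, b). {a..b}) F"
    "\<And>a b. (a, b) \<in> F \<Longrightarrow> 1 \<le> a \<and> a < b \<and> b \<le> m \<and> {a..b} \<inter> {\<psi>..\<psi> + \<xi>} = {} \<and>
      b + 1 - a = 2 * sum (count_list S) {a..b}"
    "set S \<subseteq> {\<psi>..\<psi> + \<xi>} \<union> (\<Union>(a, b)\<in>F. {a..b})"
proof -
  let ?w = "count_list S"
  obtain FL where FL: "balanced_cover ?w 1 (\<psi> - 1) FL"
    using balanced_cover_below[of \<psi>] assms suf_bounds by auto
  obtain FR where FR: "balanced_cover ?w (Suc (\<psi> + \<xi>)) m FR"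
    using balanced_cover_above assms(2) by blast
  have "finite (FL \<union> FR)" "disjoint_family_on (\<lambda>(a, b). {a..b}) (FL \<union> FR)"
    using FL FR balanced_cover_disjoint_Un[OF FL FR] by (auto simp: balanced_cover_def)
  moreover have "1 \<le> a \<and> a < b \<and> b \<le> m \<and> {a..b} \<inter> {\<psi>..\<psi> + \<xi>} = {} \<and> b + 1 - a = 2 * sum ?w {a..b}"
    if "(a, b) \<in> FL \<union> FR" for a b
  proof -
    have "\<forall>(a, b)\<in>FL. 1 \<le> a \<and> a < b \<and> b \<le> \<psi> - 1 \<and> b + 1 - a = 2 * sum ?w {a..b}"
      and "\<forall>(a, b)\<in>FR. Suc (\<psi> + \<xi>) \<le> a \<and> a < b \<and> b \<le> m \<and> b + 1 - a = 2 * sum ?w {a..b}"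
      using FL FR by (simp_all add: balanced_cover_def)
    then have "1 \<le> a \<and> a < b \<and> b + 1 - a = 2 * sum ?w {a..b} \<and> (b < \<psi> \<or> \<psi> + \<xi> < a \<and> b \<le> m)"
      using that assms(1) by fastforce
    then show ?thesis
      using assms(2) suf_bounds by auto
  qed
  moreover have "set S \<subseteq> {\<psi>..\<psi> + \<xi>} \<union> (\<Union>(a, b)\<in>FL \<union> FR. {a..b})"
  proof -
    have "set S \<subseteq> {\<psi>..\<psi> + \<xi>} \<union> {y\<in>{1..\<psi> - 1}. 0 < ?w y} \<union> {y\<in>{Suc (\<psi> + \<xi>)..m}. 0 < ?w y}"
      using entries by (auto simp: count_list_pos_iff)
    moreover have "{y\<in>{1..\<psi> - 1}. 0 < ?w y} \<subseteq> (\<Union>(a, b)\<in>FL. {a..b})"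
      and "{y\<in>{Suc (\<psi> + \<xi>)..m}. 0 < ?w y} \<subseteq> (\<Union>(a, b)\<in>FR. {a..b})"
      using FL FR by (simp_all add: balanced_cover_def)
    ultimately show ?thesis
      unfolding UN_Un by blast
  qed
  ultimately show ?thesis
    using that by blast
qed

lemma dispersed_if_isolated_interval:
  assumes "pre < \<psi>" "\<psi> + \<xi> < suf" "set S \<inter> {\<psi>..\<psi> + \<xi>} = {x}" "x = \<psi> \<or> x = \<psi> + \<xi>"
    and "\<xi> + 1 = scale * count_list S x"
  shows "dispersed m l S"
proof -
  let ?w = "count_list S"
  obtain F where F: "finite F" "disjoint_family_on (\<lambda>(a, b). {a..b}) F"
    and intervals: "\<And>a b. (a, b) \<in> F \<Longrightarrow> 1 \<le> a \<and> a < b \<and> b \<le> m \<and> {a..b} \<inter> {\<psi>..\<psi> + \<xi>} = {} \<and>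
      b + 1 - a = 2 * sum ?w {a..b}"
    and cover: "set S \<subseteq> {\<psi>..\<psi> + \<xi>} \<union> (\<Union>(a, b)\<in>F. {a..b})"
    using balanced_cover_around[OF assms(1,2)] by blast
  have "x \<in> set S"
    using assms(3) by auto
  then have "?w x \<le> length S" "2 \<le> scale * ?w x"
    using count_le_length two_le_scale_count by auto
  have "y \<notin> set S" if "y \<in> {\<psi>..\<psi> + \<xi>} - {x}" for y
    using assms(3) that by blast
  then have "sum ?w {\<psi>..\<psi> + \<xi>} = sum ?w {x}"
    using assms(3) by (intro sum.mono_neutral_right) (auto simp: count_notin)
  then have "sum ?w ({1..m} - {\<psi>..\<psi> + \<xi>}) = length S - ?w x"
    using total_weight assms(1,2) suf_bounds by (subst sum_diff_nat) auto
  moreover have "b + 1 - a = 2 * sum ?w {a..b} \<and> {a..b} \<subseteq> {1..m} - {\<psi>..\<psi> + \<xi>}"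
    if "(a, b) \<in> F" for a b
  proof -
    have "1 \<le> a" "b \<le> m" "{a..b} \<inter> {\<psi>..\<psi> + \<xi>} = {}" "b + 1 - a = 2 * sum ?w {a..b}"
      using intervals[OF that] by auto
    then show ?thesis
      by auto
  qed
  then have "(\<Sum>(a, b)\<in>F. b + 1 - a) \<le> 2 * sum ?w ({1..m} - {\<psi>..\<psi> + \<xi>})"
    by (rule sum_lengths_balanced_intervals_le[OF F finite_Diff[OF finite_atLeastAtMost]])
  moreover have "2 * (scale * ?w x + (l - ?w x)) \<le> m"
    using div_double_budget[OF l_pos m_ge] \<open>?w x \<le> length S\<close> length_le by simp
  ultimately have budget: "\<xi> + 1 + (\<Sum>(a, b)\<in>F. b + 1 - a) + 2 * (l - length S) \<le> m"
    using assms(5) \<open>?w x \<le> length S\<close> length_le by (simp add: diff_mult_distrib2)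
  show ?thesis
  proof (rule dispersed_if_interval_family[OF F _ _ _ _ cover assms(3,4) _ budget])
    show "1 \<le> a \<and> a < b \<and> b \<le> m \<and> {a..b} \<inter> {\<psi>..\<psi> + \<xi>} = {} \<and>
        2 * sum ?w {a..b} \<le> b + 1 - a" if "(a, b) \<in> F" for a b
      using intervals[OF that] by simp
    show "1 \<le> \<psi>" "1 \<le> \<xi>" "\<psi> + \<xi> \<le> m" "scale * ?w x \<le> \<xi> + 1"
      using assms(1,2,5) suf_bounds \<open>2 \<le> scale * ?w x\<close> by auto
  qed
qed

text \<open>The neighbourhoods have total size below \<open>2 * scale\<close> times the weight of the gap, and the gap
  is at least that long: the balanced ends take up only twice their own weight, and
  \<open>2 * scale * length S \<le> m\<close>.\<close>

lemma gap_point_uncovered: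
  fixes r :: "nat \<Rightarrow> nat"
  assumes "set S \<inter> {pre<..<suf} \<noteq> {}" "\<forall>x\<in>set S \<inter> {pre<..<suf}. r x < scale * count_list S x"
  obtains y where "y \<in> {pre<..<suf}" "\<forall>x\<in>set S \<inter> {pre<..<suf}. y \<notin> {x - r x..x + r x}"
proof -
  let ?w = "count_list S"
  let ?G = "{pre<..<suf}"
  let ?X = "set S \<inter> ?G"
  have "card (\<Union>x\<in>?X. {x - r x..x + r x}) \<le> (\<Sum>x\<in>?X. card {x - r x..x + r x})"
    by (rule card_UN_le) simp
  also have "\<dots> < (\<Sum>x\<in>?X. 2 * (scale * ?w x))"
  proof (rule sum_strict_mono)
    fix x
    assume "x \<in> ?X"
    have "card {x - r x..x + r x} \<le> 2 * r x + 1"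
      by simp
    moreover have "r x < scale * ?w x"
      using assms(2) \<open>x \<in> ?X\<close> by blast
    ultimately show "card {x - r x..x + r x} < 2 * (scale * ?w x)"
      by linarith
  qed (use assms(1) in auto)
  also have "\<dots> = 2 * (scale * sum ?w ?G)"
  proof -
    have "sum ?w ?G = sum ?w ?X"
      by (rule sum.mono_neutral_right) (auto simp: count_list_pos_iff)
    then show ?thesis
      by (simp add: sum_distrib_left)
  qed
  also have "\<dots> \<le> card ?G"
  proof -
    have "sum ?w ?G \<le> l"
      using weight_decomposition length_le by linarith
    then have "2 * (scale * sum ?w ?G) + (2 * l - 2 * sum ?w ?G) \<le> m"
      using div_double_budget[OF l_pos m_ge] by (simp add: distrib_left diff_mult_distrib2)
    moreover have "card ?G = suf - Suc pre"
      by simp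
    ultimately show ?thesis
      using weight_decomposition pre_dense suf_dense suf_bounds length_le by linarith
  qed
  finally have "card (\<Union>x\<in>?X. {x - r x..x + r x}) < card ?G" .
  have "\<not> ?G \<subseteq> (\<Union>x\<in>?X. {x - r x..x + r x})"
  proof
    assume "?G \<subseteq> (\<Union>x\<in>?X. {x - r x..x + r x})"
    then have "card ?G \<le> card (\<Union>x\<in>?X. {x - r x..x + r x})"
      by (intro card_mono) auto
    then show False
      using \<open>card (\<Union>x\<in>?X. {x - r x..x + r x}) < card ?G\<close> by simp
  qed
  then show ?thesis
    using that by blast
qed

lemma isolated_interval_in_gap:
  assumes "set S \<inter> {pre<..<suf} \<noteq> {}"
  obtains \<psi> \<xi> x where "pre < \<psi>" "\<psi> + \<xi> < suf" "set S \<inter> {\<psi>..\<psi> + \<xi>} = {x}"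
    "x = \<psi> \<or> x = \<psi> + \<xi>" "\<xi> + 1 = scale * count_list S x"
proof -
  let ?G = "{pre<..<suf}"
  define X where "X = set S \<inter> ?G"
  define r where "r x = scale * count_list S x - 2" for x
  have ends: "Suc (r x) + 1 = scale * count_list S x" "pre < x" "x < suf" if "x \<in> X" for x
    using two_le_scale_count[of x] that by (auto simp: r_def X_def)
  have "\<forall>x\<in>set S \<inter> ?G. r x < scale * count_list S x"
    using ends(1) unfolding X_def by (metis Suc_eq_plus1 lessI less_SucI)
  then obtain y where y: "y \<in> ?G" "\<forall>x\<in>X. y \<notin> {x - r x..x + r x}"
    unfolding X_def by (rule gap_point_uncovered[OF assms])
  have restrict: "set S \<inter> I = X \<inter> I" if "I \<subseteq> ?G" for I
    using that by (auto simp: X_def)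
  have "finite X" "X \<noteq> {}"
    using assms by (auto simp: X_def)
  from this y(2) show ?thesis
  proof (cases rule: nearest_point_isolated)
    case (1 x)
    then have "{x..x + Suc (r x)} \<subseteq> ?G"
      using ends[OF 1(1)] y(1) by auto
    then have "set S \<inter> {x..x + Suc (r x)} = {x}"
      using restrict 1(3) by simp
    moreover have "x + Suc (r x) < suf"
      using 1(2) y(1) by simp
    ultimately show ?thesis
      using that[of x "Suc (r x)" x] ends[OF 1(1)] by simp
  next
    case (2 x)
    then have x: "x - Suc (r x) + Suc (r x) = x" "pre < x - Suc (r x)"
      using y(1) by auto
    then have "{x - Suc (r x)..x} \<subseteq> ?G"
      using ends[OF 2(1)] by auto
    then have "set S \<inter> {x - Suc (r x)..x - Suc (r x) + Suc (r x)} = {x}"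
      using restrict 2(3) x(1) by simp
    then show ?thesis
      using that[of "x - Suc (r x)" "Suc (r x)" x] ends[OF 2(1)] x by simp
  qed
qed

subsection \<open>The clustered case\<close>

lemma end_blocks_budget: "scale * pre + scale * (m + 1 - suf) + 2 * (l - length S) \<le> m"
proof -
  let ?w = "count_list S"
  let ?a = "sum ?w {1..pre} + sum ?w {suf..m}"
  have "?a \<le> length S" "length S \<le> l"
    using weight_decomposition length_le by linarith+
  then have "2 * (scale * ?a) + (2 * l - 2 * ?a) \<le> m"
    using div_double_budget[OF l_pos m_ge, of ?a] by (simp add: distrib_left diff_mult_distrib2)
  moreover have "pre + (m + 1 - suf) = 2 * ?a"
    by (simp only: distrib_left flip: pre_dense suf_dense)
  then have "scale * pre + scale * (m + 1 - suf) = 2 * (scale * ?a)"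
    unfolding distrib_left[symmetric] by simp
  ultimately show ?thesis
    using \<open>?a \<le> length S\<close> \<open>length S \<le> l\<close> by (simp add: diff_mult_distrib2)
qed

lemma prefix_block:
  assumes "pre \<noteq> 0" "\<forall>y\<in>set S. y \<le> pre \<or> suf \<le> y"
  defines "A \<equiv> scale * pre"
  shows "1 < A" "let K = {1..A} \<inter> set S in scale * min (Max K - 1 + 1) (A - Min K + 1) \<le> A + 1 - 1"
proof -
  let ?w = "count_list S"
  let ?K = "{1..A} \<inter> set S"
  have "pre \<le> A" "m + 1 - suf \<le> scale * (m + 1 - suf)"
    using two_le_scale by (simp_all add: A_def)
  then have "A < suf"
    using end_blocks_budget suf_bounds unfolding A_def by linarith
  have "sum ?w {1..pre} \<noteq> 0"
    using assms(1) pre_dense by linarith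
  then obtain y where "y \<in> {1..pre}" "?w y \<noteq> 0"
    by (meson sum.neutral)
  then have "y \<in> ?K"
    using \<open>pre \<le> A\<close> by (simp add: count_list_0_iff)
  then have "?K \<noteq> {}"
    by blast
  have "?K \<subseteq> {1..pre}"
  proof
    fix z
    assume z: "z \<in> ?K"
    then have "z \<le> pre \<or> suf \<le> z"
      using assms(2) by blast
    then show "z \<in> {1..pre}"
      using z \<open>A < suf\<close> by auto
  qed
  moreover have "Max ?K \<in> ?K"
    using \<open>?K \<noteq> {}\<close> by (intro Max_in) auto
  ultimately have "Max ?K \<in> {1..pre}"
    by blast
  then have "Max ?K < 1 + pre"
    by simp
  then show "let K = ?K in scale * min (Max K - 1 + 1) (A - Min K + 1) \<le> A + 1 - 1"
    unfolding Let_def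
  proof (intro scaled_end_distance_le[where d = pre] disjI1)
    show "finite ?K" "?K \<noteq> {}" "?K \<subseteq> {1..A}" "scale * pre \<le> A + 1 - 1"
      using \<open>?K \<noteq> {}\<close> by (auto simp: A_def)
  qed
  show "1 < A"
    using \<open>sum ?w {1..pre} \<noteq> 0\<close> \<open>pre \<le> A\<close> pre_dense by linarith
qed

lemma suffix_block:
  assumes "suf \<noteq> m + 1" "\<forall>y\<in>set S. y \<le> pre \<or> suf \<le> y"
  defines "P \<equiv> m + 1 - scale * (m + 1 - suf)"
  shows "1 \<le> P" "P < m" "let K = {P..m} \<inter> set S in scale * min (Max K - P + 1) (m - Min K + 1) \<le> m + 1 - P"
proof -
  let ?w = "count_list S"
  let ?K = "{P..m} \<inter> set S"
  have "m + 1 - suf \<le> scale * (m + 1 - suf)" "pre \<le> scale * pre"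
    using two_le_scale by simp_all
  then have "P \<le> suf" "pre < P" "1 \<le> P" "m + 1 - P = scale * (m + 1 - suf)"
    using end_blocks_budget suf_bounds unfolding P_def by linarith+
  have "sum ?w {suf..m} \<noteq> 0"
    using assms(1) suf_dense suf_bounds by linarith
  then obtain y where "y \<in> {suf..m}" "?w y \<noteq> 0"
    by (meson sum.neutral)
  then have "y \<in> ?K"
    using \<open>P \<le> suf\<close> by (simp add: count_list_0_iff)
  then have "?K \<noteq> {}"
    by blast
  have "?K \<subseteq> {suf..m}"
  proof
    fix z
    assume z: "z \<in> ?K"
    then have "z \<le> pre \<or> suf \<le> z"
      using assms(2) by blast
    then show "z \<in> {suf..m}"
      using z \<open>pre < P\<close> by auto
  qed
  moreover have "Min ?K \<in> ?K"
    using \<open>?K \<noteq> {}\<close> by (intro Min_in) auto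
  ultimately have "Min ?K \<in> {suf..m}"
    by blast
  then have "m < Min ?K + (m + 1 - suf)"
    using suf_bounds by auto
  then show "let K = ?K in scale * min (Max K - P + 1) (m - Min K + 1) \<le> m + 1 - P"
    unfolding Let_def
  proof (intro scaled_end_distance_le[where d = "m + 1 - suf"] disjI2)
    show "finite ?K" "?K \<noteq> {}" "?K \<subseteq> {P..m}"
      using \<open>?K \<noteq> {}\<close> by auto
    show "scale * (m + 1 - suf) \<le> m + 1 - P"
      using \<open>m + 1 - P = scale * (m + 1 - suf)\<close> by simp
  qed
  show "1 \<le> P"
    by fact
  show "P < m"
    using \<open>sum ?w {suf..m} \<noteq> 0\<close> \<open>m + 1 - suf \<le> scale * (m + 1 - suf)\<close> suf_dense
    unfolding P_def by linarith
qed

lemma clustered_if_gap_empty: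
  assumes "S \<noteq> []" "\<forall>y\<in>set S. y \<le> pre \<or> suf \<le> y"
  shows "clustered m l S"
proof -
  define A where "A = scale * pre"
  define B where "B = scale * (m + 1 - suf)"
  define F1 where "F1 = (if pre = 0 then {} else {(1 :: nat, A)})"
  define F2 where "F2 = (if suf = m + 1 then {} else {(m + 1 - B, m)})"
  note prefix = prefix_block[OF _ assms(2), folded A_def]
  note suffix = suffix_block[OF _ assms(2), folded B_def]
  have "pre \<le> A" "m + 1 - suf \<le> B"
    using two_le_scale by (simp_all add: A_def B_def)
  have budget: "A + B + 2 * (l - length S) \<le> m"
    using end_blocks_budget by (simp add: A_def B_def)
  have intervals: "1 \<le> a \<and> a < b \<and> b \<le> m" if "(a, b) \<in> F1 \<union> F2" for a b
    using that prefix(1) suffix(1,2) budget by (auto simp: F1_def F2_def split: if_splits)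
  have nonempty: "F1 \<union> F2 \<noteq> {}"
  proof -
    obtain y where "y \<in> set S"
      using assms(1) by (cases S) auto
    then have "pre \<noteq> 0 \<or> suf \<noteq> m + 1"
      using assms(2) entries by fastforce
    then show ?thesis
      by (auto simp: F1_def F2_def)
  qed
  have disjoint: "disjoint_family_on (\<lambda>(a, b). {a..b}) (F1 \<union> F2)"
    using budget by (auto simp: F1_def F2_def disjoint_family_on_def)
  have cover: "set S \<subseteq> (\<Union>(a, b)\<in>F1 \<union> F2. {a..b})"
  proof
    fix y
    assume "y \<in> set S"
    then have "1 \<le> y" "y \<le> m" "y \<le> pre \<or> suf \<le> y"
      using assms(2) entries by auto
    then show "y \<in> (\<Union>(a, b)\<in>F1 \<union> F2. {a..b})"
      using \<open>pre \<le> A\<close> \<open>m + 1 - suf \<le> B\<close> by (auto simp: F1_def F2_def)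
  qed
  have lengths: "(\<Sum>(a, b)\<in>F1 \<union> F2. b + 1 - a) \<le> A + B"
  proof -
    have "(\<Sum>(a, b)\<in>F1 \<union> F2. b + 1 - a) \<le> (\<Sum>(a, b)\<in>F1. b + 1 - a) + (\<Sum>(a, b)\<in>F2. b + 1 - a)"
    proof -
      have "finite F1" "finite F2"
        by (simp_all add: F1_def F2_def)
      then show ?thesis
        using sum.union_inter[of F1 F2 "\<lambda>(a, b). b + 1 - a"] by linarith
    qed
    also have "\<dots> \<le> A + B"
      using budget by (simp add: F1_def F2_def)
    finally show ?thesis .
  qed
  show ?thesis
  proof (rule clustered_if_interval_family[OF _ nonempty disjoint intervals cover])
    show "finite (F1 \<union> F2)"
      by (simp add: F1_def F2_def)
    show "(\<Sum>(a, b)\<in>F1 \<union> F2. b + 1 - a) + 2 * (l - length S) \<le> m"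
      using lengths budget by linarith
    fix a b
    assume "(a, b) \<in> F1 \<union> F2"
    then consider "pre \<noteq> 0" "a = 1" "b = A" | "suf \<noteq> m + 1" "a = m + 1 - B" "b = m"
      by (auto simp: F1_def F2_def split: if_splits)
    then show "let K = {a..b} \<inter> set S in scale * min (Max K - a + 1) (b - Min K + 1) \<le> b + 1 - a"
      by cases (use prefix(2) suffix(3) in simp_all)
  qed
qed

end

lemma dense_ends_exist:
  assumes "1 \<le> l" "4 * l \<le> m" "length S \<le> l" "set S \<subseteq> {1..m}"
  obtains pre suf where "dense_ends m l S pre suf"
proof -
  have "2 * sum (count_list S) {1..m} \<le> m"
    using sum_count_set[OF assms(4)] assms(2,3) by simp
  obtain pre where "pre \<le> m" "pre = 2 * sum (count_list S) {1..pre}"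
    "\<forall>z\<in>{pre<..m}. 2 * sum (count_list S) {1..z} < z"
    using longest_dense_prefix[OF \<open>2 * sum (count_list S) {1..m} \<le> m\<close>] by blast
  moreover obtain suf where "1 \<le> suf" "suf \<le> m + 1" "m + 1 - suf = 2 * sum (count_list S) {suf..m}"
    "\<forall>s\<in>{1..<suf}. 2 * sum (count_list S) {s..m} < m + 1 - s"
    using longest_dense_suffix[OF \<open>2 * sum (count_list S) {1..m} \<le> m\<close>] by blast
  ultimately have "dense_ends m l S pre suf"
    using assms by unfold_locales auto
  then show ?thesis
    using that by blast
qed

theorem lemma20:
  fixes m l :: nat and S :: "nat list"
  assumes "l \<ge> 1" and "m \<ge> 4 * l"
    and "1 \<le> length S" and "length S \<le> l"
    and "set S \<subseteq> {1..m}"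
  shows "clustered m l S \<or> dispersed m l S"
proof -
  obtain pre suf where "dense_ends m l S pre suf"
    using dense_ends_exist assms(1,2,4,5) by blast
  then interpret dense_ends m l S pre suf .
  show ?thesis
  proof (cases "set S \<inter> {pre<..<suf} = {}")
    case True
    then have "clustered m l S"
      using clustered_if_gap_empty assms(3) by fastforce
    then show ?thesis ..
  next
    case False
    then obtain \<psi> \<xi> x where "pre < \<psi>" "\<psi> + \<xi> < suf" "set S \<inter> {\<psi>..\<psi> + \<xi>} = {x}"
      "x = \<psi> \<or> x = \<psi> + \<xi>" "\<xi> + 1 = scale * count_list S x"
      by (rule isolated_interval_in_gap)
    then have "dispersed m l S"
      by (rule dispersed_if_isolated_interval)
    then show ?thesis ..
  qed
qed

end
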